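(* Let $F=\frac1{16}\begin{pmatrix}1&2&1\\2&4&2\\1&2&1\end{pmatrix}$ (Gaussian blur filter). Then the equation $F*X=B$ with the zero boundary condition, for unknown $X\in\mathbb{R}^{m\times n}$, has a unique solution for every $B\in\mathbb{R}^{m\times n}$ (for all $m,n\in\mathbb{N}$).
   Context: For $F=[f_{ij}]\in\mathbb{R}^{3\times3}$ and $X=[x_{ij}]\in\mathbb{R}^{m\times n}$, the convolution $F*X\in\mathbb{R}^{m\times n}$ is defined by $[F*X]_{ij}=\sum_{l_1=1}^3\sum_{l_2=1}^3 f_{l_1l_2}\,x_{i-l_1+2,\,j-l_2+2}$ for $1\le i\le m$, $1\le j\le n$, where under the zero boundary condition all values $x_{ij}$ with $i\in\{0,m+1\}$ or $j\in\{0,n+1\}$ are $0$. *)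

theory Defs
  imports Complex_Main
begin

text \<open>An m x n real matrix is represented as a function nat => nat => real whose entries
  outside the index range {1..m} x {1..n} are zero (this encodes the zero boundary condition).\<close>

definition is_mat :: "nat \<Rightarrow> nat \<Rightarrow> (nat \<Rightarrow> nat \<Rightarrow> real) \<Rightarrow> bool" where
  "is_mat m n X \<longleftrightarrow> (\<forall>i j. \<not> (1 \<le> i \<and> i \<le> m \<and> 1 \<le> j \<and> j \<le> n) \<longrightarrow> X i j = 0)"

text \<open>Indices i-l1+2 are computed in int to avoid truncation.\<close>

definition xval :: "nat \<Rightarrow> nat \<Rightarrow> (nat \<Rightarrow> nat \<Rightarrow> real) \<Rightarrow> int \<Rightarrow> int \<Rightarrow> real" where
  "xval m n X a b = (if 1 \<le> a \<and> a \<le> int m \<and> 1 \<le> b \<and> b \<le> int n then X (nat a) (nat b) else 0)"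

definition conv0 :: "nat \<Rightarrow> nat \<Rightarrow> (nat \<Rightarrow> nat \<Rightarrow> real) \<Rightarrow> (nat \<Rightarrow> nat \<Rightarrow> real) \<Rightarrow> (nat \<Rightarrow> nat \<Rightarrow> real)" where
  "conv0 m n F X = (\<lambda>i j. if 1 \<le> i \<and> i \<le> m \<and> 1 \<le> j \<and> j \<le> n then
      (\<Sum>l1\<in>{1..3::nat}. \<Sum>l2\<in>{1..3::nat}.
         F l1 l2 * xval m n X (int i - int l1 + 2) (int j - int l2 + 2))
    else 0)"

definition gauss_filter :: "nat \<Rightarrow> nat \<Rightarrow> real" where
  "gauss_filter l1 l2 = (1/16) * (if l1 = 2 then 2 else 1) * (if l2 = 2 then 2 else 1)"

end

theory Submission
  imports Defs
begin

text \<open>The Gaussian filter is the outer product of (1, 2, 1) with itself, divided by 16, so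
  convolution with it factors as X \<mapsto> T(m) X T(n) / 16, where T(k) is the k \<times> k tridiagonal
  matrix with 2 on the diagonal and 1 on the two neighbouring diagonals: T(n) acts on the rows
  of X and T(m) on its columns. It remains to invert T(k), i.e. to solve
  x(i-1) + 2 x(i) + x(i+1) = b(i) for 1 \<le> i \<le> k with x(0) = x(k+1) = 0. This is done by
  shooting: for a guessed value c of x(1) the recurrence determines x, which is affine in c
  with slope (-1)^k (k + 1) \<noteq> 0 at index k + 1, so exactly one c meets the boundary
  condition x(k+1) = 0.\<close>

definition is_vec :: "nat \<Rightarrow> (nat \<Rightarrow> real) \<Rightarrow> bool" where
  "is_vec k x \<longleftrightarrow> (\<forall>i. \<not> (1 \<le> i \<and> i \<le> k) \<longrightarrow> x i = 0)"

definition tridiag121 :: "nat \<Rightarrow> (nat \<Rightarrow> real) \<Rightarrow> nat \<Rightarrow> real" where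
  "tridiag121 k x i = (if 1 \<le> i \<and> i \<le> k then x (i - 1) + 2 * x i + x (i + 1) else 0)"

lemma is_vec_tridiag121: "is_vec k (tridiag121 k x)"
  by (simp add: is_vec_def tridiag121_def)

fun sweep :: "(nat \<Rightarrow> real) \<Rightarrow> real \<Rightarrow> nat \<Rightarrow> real" where
  "sweep b c 0 = 0"
| "sweep b c (Suc 0) = c"
| "sweep b c (Suc (Suc i)) = b (Suc i) - 2 * sweep b c (Suc i) - sweep b c i"

lemma sweep_affine: "sweep b c i = sweep b 0 i + c * ((-1) ^ (i + 1) * real i)"
proof (induction i rule: induct_nat_012)
  case (ge2 i)
  then show ?case by (simp add: algebra_simps)
qed simp_all

lemma sweep_eq_sweep_iff:
  assumes "i > 0"
  shows "sweep b c i = sweep b c' i \<longleftrightarrow> c = c'"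
  using assms by (subst (1 2) sweep_affine) simp

lemma sweep_reaches_zero:
  assumes "i > 0"
  shows "\<exists>c. sweep b c i = 0"
proof
  define s :: real where "s = (-1) ^ (i + 1) * real i"
  have "s \<noteq> 0"
    using assms by (simp add: s_def)
  then show "sweep b (- sweep b 0 i / s) i = 0"
    unfolding sweep_affine[of b "- sweep b 0 i / s" i] s_def[symmetric] by simp
qed

lemma is_vec_eq_sweep:
  assumes "is_vec k x" "i \<le> k + 1"
  shows "x i = sweep (tridiag121 k x) (x 1) i"
  using assms(2)
proof (induction i rule: induct_nat_012)
  case 0
  then show ?case using assms(1) by (simp add: is_vec_def)
next
  case (ge2 i)
  then show ?case by (simp add: tridiag121_def algebra_simps)
qed simp

lemma inj_on_tridiag121: "inj_on (tridiag121 k) {x. is_vec k x}"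
proof (rule inj_onI, clarify)
  fix x y assume x: "is_vec k x" and y: "is_vec k y" and eq: "tridiag121 k x = tridiag121 k y"
  have "sweep (tridiag121 k x) (x 1) (k + 1) = sweep (tridiag121 k x) (y 1) (k + 1)"
    using is_vec_eq_sweep[OF x, of "k + 1"] is_vec_eq_sweep[OF y, of "k + 1"] x y eq
    by (simp add: is_vec_def)
  then have "x 1 = y 1"
    by (simp add: sweep_eq_sweep_iff)
  then have "x i = y i" if "i \<le> k + 1" for i
    using is_vec_eq_sweep[OF x that] is_vec_eq_sweep[OF y that] eq by simp
  moreover have "x i = y i" if "\<not> i \<le> k + 1" for i
    using x y that by (simp add: is_vec_def)
  ultimately show "x = y"
    by (meson ext)
qed

lemma tridiag121_surj:
  assumes "is_vec k b"
  shows "\<exists>x. is_vec k x \<and> tridiag121 k x = b"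
proof -
  obtain c where c: "sweep b c (k + 1) = 0"
    using sweep_reaches_zero[of "k + 1" b] by auto
  define x where "x i = (if 1 \<le> i \<and> i \<le> k then sweep b c i else 0)" for i
  have x_sweep: "x i = sweep b c i" if "i \<le> k + 1" for i
    using that c by (cases "i = 0 \<or> i = k + 1") (auto simp: x_def)
  have "is_vec k x"
    by (simp add: is_vec_def x_def)
  moreover have "tridiag121 k x = b"
  proof
    fix i
    show "tridiag121 k x i = b i"
    proof (cases "1 \<le> i \<and> i \<le> k")
      case True
      then obtain j where "i = Suc j" by (cases i) auto
      with True show ?thesis by (simp add: tridiag121_def x_sweep)
    next
      case False
      then show ?thesis using assms by (auto simp: tridiag121_def is_vec_def)
    qed
  qed
  ultimately show ?thesis
    by blast
qed

lemma bij_betw_tridiag121: "bij_betw (tridiag121 k) {x. is_vec k x} {x. is_vec k x}"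
  unfolding bij_betw_def
  using inj_on_tridiag121 tridiag121_surj is_vec_tridiag121 by blast

lemma is_mat_iff_rows:
  "is_mat m n X \<longleftrightarrow> (\<forall>i. if 1 \<le> i \<and> i \<le> m then is_vec n (X i) else X i = (\<lambda>_. 0))"
  by (auto simp: is_mat_def is_vec_def fun_eq_iff)

definition row_map ::
    "nat \<Rightarrow> ((nat \<Rightarrow> real) \<Rightarrow> nat \<Rightarrow> real) \<Rightarrow> (nat \<Rightarrow> nat \<Rightarrow> real) \<Rightarrow> nat \<Rightarrow> nat \<Rightarrow> real" where
  "row_map m f X i = (if 1 \<le> i \<and> i \<le> m then f (X i) else (\<lambda>_. 0))"

lemma bij_betw_row_map:
  assumes "bij_betw f {x. is_vec n x} {x. is_vec n' x}"
  shows "bij_betw (row_map m f) {X. is_mat m n X} {X. is_mat m n' X}"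
proof (rule bij_betw_byWitness[where f' = "row_map m (inv_into {x. is_vec n x} f)"])
  have f: "f x \<in> {x. is_vec n' x}" "inv_into {x. is_vec n x} f (f x) = x" if "is_vec n x" for x
    using assms that by (auto simp: bij_betw_def)
  have g: "inv_into {x. is_vec n x} f y \<in> {x. is_vec n x}" "f (inv_into {x. is_vec n x} f y) = y"
    if "is_vec n' y" for y
    using bij_betw_apply[OF bij_betw_inv_into[OF assms]] bij_betw_inv_into_right[OF assms] that
    by auto
  show "\<forall>X\<in>{X. is_mat m n X}. row_map m (inv_into {x. is_vec n x} f) (row_map m f X) = X"
    "\<forall>Y\<in>{X. is_mat m n' X}. row_map m f (row_map m (inv_into {x. is_vec n x} f) Y) = Y"
    "row_map m f ` {X. is_mat m n X} \<subseteq> {X. is_mat m n' X}"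
    "row_map m (inv_into {x. is_vec n x} f) ` {X. is_mat m n' X} \<subseteq> {X. is_mat m n X}"
    using f g by (auto simp: is_mat_iff_rows row_map_def fun_eq_iff split: if_splits)
qed

definition mat_transpose :: "(nat \<Rightarrow> nat \<Rightarrow> real) \<Rightarrow> nat \<Rightarrow> nat \<Rightarrow> real" where
  "mat_transpose X i j = X j i"

lemma bij_betw_mat_transpose: "bij_betw mat_transpose {X. is_mat m n X} {X. is_mat n m X}"
  by (rule bij_betw_byWitness[where f' = mat_transpose])
    (auto simp: mat_transpose_def is_mat_def fun_eq_iff)

definition blur121 :: "nat \<Rightarrow> nat \<Rightarrow> (nat \<Rightarrow> nat \<Rightarrow> real) \<Rightarrow> nat \<Rightarrow> nat \<Rightarrow> real" where
  "blur121 m n =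
     mat_transpose \<circ> row_map n (tridiag121 m) \<circ> mat_transpose \<circ> row_map m (tridiag121 n)"

lemma bij_betw_blur121: "bij_betw (blur121 m n) {X. is_mat m n X} {X. is_mat m n X}"
  unfolding blur121_def
  using bij_betw_row_map[OF bij_betw_tridiag121] bij_betw_mat_transpose
  by (blast intro: bij_betw_trans)

lemma row_map_tridiag121_apply:
  assumes "is_mat m n X" "1 \<le> j" "j \<le> n"
  shows "row_map m (tridiag121 n) X i j = X i (j - 1) + 2 * X i j + X i (j + 1)"
  using assms by (auto simp: row_map_def tridiag121_def is_mat_def)

lemma xval_is_mat:
  assumes "is_mat m n X" "a \<ge> 0" "b \<ge> 0"
  shows "xval m n X a b = X (nat a) (nat b)"
  using assms unfolding xval_def is_mat_def by (auto simp: le_nat_iff nat_le_iff)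

lemma sum_atLeastAtMost_1_3: "(\<Sum>l\<in>{1..3::nat}. f l) = f 1 + f 2 + f 3"
  by (simp add: numeral_3_eq_3 numeral_2_eq_2 atLeastAtMostSuc_conv add_ac)

lemma conv0_gauss_filter:
  assumes X: "is_mat m n X"
  shows "conv0 m n gauss_filter X = (\<lambda>i j. blur121 m n X i j / 16)"
proof (intro ext)
  fix i j
  show "conv0 m n gauss_filter X i j = blur121 m n X i j / 16"
  proof (cases "1 \<le> i \<and> i \<le> m \<and> 1 \<le> j \<and> j \<le> n")
    case False
    then show ?thesis
      by (auto simp: conv0_def blur121_def mat_transpose_def row_map_def tridiag121_def)
  next
    case True
    have "conv0 m n gauss_filter X i j =
      (X (i - 1) (j - 1) + 2 * X (i - 1) j + X (i - 1) (j + 1)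
       + 2 * (X i (j - 1) + 2 * X i j + X i (j + 1))
       + (X (i + 1) (j - 1) + 2 * X (i + 1) j + X (i + 1) (j + 1))) / 16"
      unfolding conv0_def sum_atLeastAtMost_1_3 using True
      by (simp add: gauss_filter_def xval_is_mat[OF X] nat_add_distrib nat_diff_distrib)
    also have "\<dots> = blur121 m n X i j / 16"
      using True
      by (simp add: blur121_def mat_transpose_def row_map_def[of n] tridiag121_def
          row_map_tridiag121_apply[OF X])
    finally show ?thesis .
  qed
qed

theorem corollary4:
  fixes m n :: nat and B :: "nat \<Rightarrow> nat \<Rightarrow> real"
  assumes "is_mat m n B"
  shows "\<exists>!X. is_mat m n X \<and> conv0 m n gauss_filter X = B"
proof -
  have "is_mat m n (\<lambda>i j. 16 * B i j)"
    using assms by (simp add: is_mat_def)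
  then obtain X where X: "is_mat m n X" and blur_X: "blur121 m n X = (\<lambda>i j. 16 * B i j)"
    using bij_betw_imp_surj_on[OF bij_betw_blur121, of m n] by (metis imageE mem_Collect_eq)
  show ?thesis
  proof (rule ex1I)
    show "is_mat m n X \<and> conv0 m n gauss_filter X = B"
      using X blur_X by (simp add: conv0_gauss_filter)
  next
    fix Y assume Y: "is_mat m n Y \<and> conv0 m n gauss_filter Y = B"
    then have "blur121 m n Y = blur121 m n X"
      using blur_X by (auto simp: conv0_gauss_filter fun_eq_iff)
    then show "Y = X"
      using X Y bij_betw_blur121 by (auto simp: bij_betw_def inj_on_def)
  qed
qed

end
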